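(* Let $p>0$, $m>0$, and let $N$ be a random variable on $\mathbb{N}_0$ with the Takacs probability mass function \[ f(n)=\mathbb{P}(N=n)=\nu(n)\Big(\frac{m(p+m)}{(p+2m)^2}\Big)^{n}\Big(\frac{p+m}{p+2m}\Big)^{p},\qquad \nu(n)=\frac{p}{n+p}\,\frac{(n+p)(n+p+1)\cdots(2n+p-1)}{n!}, \] for $n\in\mathbb{N}_0$ (with $\nu(0)=1$). Let $b(n)=\frac{1}{\sqrt{n+1}}\big(\sqrt{1+\tfrac1n}-1\big)$ for $n\ge 1$. Then there is a constant $C$ not depending on $n$ such that \[ f(n\mid n\ge 1):=\mathbb{P}(N=n\mid N\ge 1)\le C\,b(n)\qquad\text{for all } n=1,2,\ldots. \]
   Context: $b$ is the probability mass function of $\lfloor U^{-2}\rfloor$ for $U$ uniform on $(0,1)$. The constant $C$ may depend on $p$ and $m$. *)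

theory Defs
  imports Complex_Main
begin

definition takacs_nu :: "real \<Rightarrow> nat \<Rightarrow> real" where
  "takacs_nu p n = p / (real n + p) * pochhammer (real n + p) n / fact n"

definition takacs_pmf :: "real \<Rightarrow> real \<Rightarrow> nat \<Rightarrow> real" where
  "takacs_pmf p m n = takacs_nu p n * (m * (p + m) / (p + 2 * m)^2) ^ n
      * ((p + m) / (p + 2 * m)) powr p"

definition takacs_cond :: "real \<Rightarrow> real \<Rightarrow> nat \<Rightarrow> real" where
  "takacs_cond p m n = takacs_pmf p m n / (1 - takacs_pmf p m 0)"

definition b_fun :: "nat \<Rightarrow> real" where
  "b_fun n = 1 / sqrt (real n + 1) * (sqrt (1 + 1 / real n) - 1)"

end

theory Submission
  imports Defs "HOL-Real_Asymp.Real_Asymp"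
begin

text \<open>
  The ratio of consecutive Takacs probabilities tends to \<open>4 m (p + m) / (p + 2 m)\<^sup>2\<close>, which is
  smaller than \<open>1\<close> because \<open>(p + 2 m)\<^sup>2 - 4 m (p + m) = p\<^sup>2\<close>. By the ratio test every polynomial
  moment of \<open>N\<close> is finite, so \<open>(n + 1)\<^sup>2 f n\<close> is bounded by \<open>E (N + 1)\<^sup>2\<close>. On the other hand
  \<open>b n \<ge> 1 / (3 (n + 1)\<^sup>2)\<close>, and conditioning on \<open>N \<ge> 1\<close> only divides by \<open>1 - f 0 > 0\<close>.
\<close>

lemma summable_ratio_tendsto:
  fixes f r :: "nat \<Rightarrow> real"
  assumes nonneg: "\<And>n. 0 \<le> f n" and step: "\<And>n. f (Suc n) = f n * r n"
    and lim: "r \<longlonglongrightarrow> l" and "l < 1"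
  shows "summable f"
proof -
  define c where "c = (l + 1) / 2"
  have "c < 1" "l < c" using \<open>l < 1\<close> by (simp_all add: c_def)
  obtain N where N: "\<And>n. n \<ge> N \<Longrightarrow> r n < c"
    using order_tendstoD(2)[OF lim \<open>l < c\<close>] unfolding eventually_sequentially by blast
  have "norm (f (Suc n)) \<le> c * norm (f n)" if "n \<ge> N" for n
    using mult_left_mono[OF less_imp_le[OF N[OF that]] nonneg[of n]] nonneg[of n] nonneg[of "Suc n"]
    by (simp add: step mult.commute)
  with \<open>c < 1\<close> show ?thesis by (rule summable_ratio_test)
qed

lemma takacs_nu_nonneg: "p > 0 \<Longrightarrow> 0 \<le> takacs_nu p n"
  unfolding takacs_nu_def by (intro divide_nonneg_nonneg mult_nonneg_nonneg pochhammer_nonneg) auto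

lemma takacs_pmf_nonneg: "p > 0 \<Longrightarrow> m > 0 \<Longrightarrow> 0 \<le> takacs_pmf p m n"
  unfolding takacs_pmf_def using takacs_nu_nonneg[of p n] by simp

lemma takacs_nu_Suc:
  assumes "p > 0"
  shows "takacs_nu p (Suc n) =
    takacs_nu p n * ((2 * real n + p) * (2 * real n + p + 1) / ((real n + p + 1) * (real n + 1)))"
proof -
  have np: "real n + p > 0" using assms by simp
  have "pochhammer (real n + p) (Suc n) = pochhammer (real n + p) n * (2 * real n + p)"
    by (simp add: pochhammer_Suc algebra_simps)
  moreover have "pochhammer (real n + p) (Suc n) = (real n + p) * pochhammer (real n + p + 1) n"
    by (simp add: pochhammer_rec algebra_simps)
  ultimately have shift:
    "pochhammer (real n + p + 1) n = pochhammer (real n + p) n * (2 * real n + p) / (real n + p)"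
    using np by (simp add: field_simps)
  have step:
    "pochhammer (real n + p + 1) (Suc n) = pochhammer (real n + p + 1) n * (2 * real n + p + 1)"
    by (simp add: pochhammer_Suc algebra_simps)
  have "takacs_nu p (Suc n) = p / (real n + p + 1) * pochhammer (real n + p + 1) (Suc n) / fact (Suc n)"
    unfolding takacs_nu_def by (simp add: add_ac)
  also have "\<dots> = p / (real n + p + 1) *
      (pochhammer (real n + p) n * (2 * real n + p) / (real n + p) * (2 * real n + p + 1)) / ((real n + 1) * fact n)"
    by (simp only: step shift fact_Suc of_nat_mult) (simp add: add_ac)
  also have "\<dots> = takacs_nu p n * ((2 * real n + p) * (2 * real n + p + 1) / ((real n + p + 1) * (real n + 1)))"
    unfolding takacs_nu_def using np by (simp add: field_simps)
  finally show ?thesis .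
qed

lemma takacs_nu_ratio_tendsto:
  "(\<lambda>n. (2 * real n + p) * (2 * real n + p + 1) / ((real n + p + 1) * (real n + 1))) \<longlonglongrightarrow> 4"
  by real_asymp

lemma takacs_base_times_4_less_1:
  fixes p m :: real
  assumes "p > 0" "m > 0"
  shows "4 * (m * (p + m) / (p + 2 * m)^2) < 1"
proof -
  have "4 * (m * (p + m)) < (p + 2 * m)^2"
    using \<open>p > 0\<close> by (simp add: power2_eq_square algebra_simps)
  then show ?thesis using assms by (simp add: field_simps)
qed

lemma summable_takacs_moment:
  fixes p m :: real
  assumes "p > 0" "m > 0"
  shows "summable (\<lambda>n. (real n + 1)^k * takacs_pmf p m n)"
proof (rule summable_ratio_tendsto)
  define q where "q = m * (p + m) / (p + 2 * m)^2"
  define \<rho> where "\<rho> n = (2 * real n + p) * (2 * real n + p + 1) / ((real n + p + 1) * (real n + 1))" for n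
  show "0 \<le> (real n + 1)^k * takacs_pmf p m n" for n
    using takacs_pmf_nonneg[OF assms] by simp
  show "(real (Suc n) + 1)^k * takacs_pmf p m (Suc n) =
      (real n + 1)^k * takacs_pmf p m n * (((real n + 2) / (real n + 1))^k * (q * \<rho> n))" for n
  proof -
    have "(real (Suc n) + 1)^k = (real n + 1)^k * ((real n + 2) / (real n + 1))^k"
      by (simp add: power_divide add_ac)
    moreover have "takacs_pmf p m (Suc n) = takacs_pmf p m n * (q * \<rho> n)"
      unfolding takacs_pmf_def takacs_nu_Suc[OF \<open>p > 0\<close>] q_def \<rho>_def by (simp add: mult_ac)
    ultimately show ?thesis by (simp add: mult_ac)
  qed
  have "(\<lambda>n. (real n + 2) / (real n + 1)) \<longlonglongrightarrow> 1" by real_asymp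
  then show "(\<lambda>n. ((real n + 2) / (real n + 1))^k * (q * \<rho> n)) \<longlonglongrightarrow> 1^k * (q * 4)"
    unfolding \<rho>_def by (intro tendsto_intros takacs_nu_ratio_tendsto)
  have "q * 4 < 1"
    using takacs_base_times_4_less_1[OF assms] unfolding q_def by (metis mult.commute)
  then show "1^k * (q * 4) < 1" by simp
qed

lemma takacs_pmf_0_less_1:
  fixes p m :: real
  assumes "p > 0" "m > 0"
  shows "takacs_pmf p m 0 < 1"
proof -
  have "((p + m) / (p + 2 * m)) powr p < 1 powr p"
    using assms by (intro powr_less_mono2) auto
  then show ?thesis unfolding takacs_pmf_def takacs_nu_def using assms by simp
qed

lemma b_fun_lower_bound:
  assumes "n \<ge> 1"
  shows "1 / (3 * (real n + 1)^2) \<le> b_fun n"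
proof -
  have n: "real n \<ge> 1" using assms by simp
  have "sqrt (real n + 1) \<le> real n + 1"
    using n by (intro real_le_lsqrt) (auto simp: power2_eq_square)
  then have root: "1 / (real n + 1) \<le> 1 / sqrt (real n + 1)"
    using n by (intro divide_left_mono) auto
  have "(1 + 1 / (3 * real n))^2 \<le> 1 + 1 / real n"
    using n by (simp add: power2_eq_square field_simps)
  then have "1 + 1 / (3 * real n) \<le> sqrt (1 + 1 / real n)"
    by (rule real_le_rsqrt)
  moreover have "1 / (3 * (real n + 1)) \<le> 1 / (3 * real n)"
    using n by (intro divide_left_mono) auto
  ultimately have diff: "1 / (3 * (real n + 1)) \<le> sqrt (1 + 1 / real n) - 1"
    by linarith
  have "1 / (3 * (real n + 1)^2) = 1 / (real n + 1) * (1 / (3 * (real n + 1)))"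
    by (simp add: power2_eq_square)
  also have "\<dots> \<le> 1 / sqrt (real n + 1) * (sqrt (1 + 1 / real n) - 1)"
    using root diff n by (intro mult_mono) auto
  finally show ?thesis unfolding b_fun_def .
qed

theorem mainTheorem5:
  fixes p m :: real
  assumes "p > 0" and "m > 0"
  shows "\<exists>C. \<forall>n::nat. n \<ge> 1 \<longrightarrow> takacs_cond p m n \<le> C * b_fun n"
proof (intro exI allI impI)
  define S where "S = (\<Sum>n. (real n + 1)^2 * takacs_pmf p m n)"
  define f0 where "f0 = takacs_pmf p m 0"
  have nonneg: "0 \<le> (real n + 1)^2 * takacs_pmf p m n" for n
    using takacs_pmf_nonneg[OF assms] by simp
  note summable = summable_takacs_moment[OF assms, of 2]
  have f0: "f0 < 1" unfolding f0_def using takacs_pmf_0_less_1[OF assms] .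
  have "0 \<le> S" unfolding S_def using summable nonneg by (rule suminf_nonneg)
  fix n :: nat assume "n \<ge> 1"
  have "(real n + 1)^2 * takacs_pmf p m n \<le> S"
    using sum_le_suminf[OF summable, of "{n}"] nonneg unfolding S_def by simp
  then have "takacs_cond p m n \<le> S / (real n + 1)^2 / (1 - f0)"
    unfolding takacs_cond_def f0_def[symmetric] using f0
    by (intro divide_right_mono) (auto simp: field_simps)
  also have "\<dots> = 3 * S / (1 - f0) * (1 / (3 * (real n + 1)^2))" by simp
  also have "\<dots> \<le> 3 * S / (1 - f0) * b_fun n"
    using b_fun_lower_bound[OF \<open>n \<ge> 1\<close>] f0 \<open>0 \<le> S\<close> by (intro mult_left_mono) auto
  finally show "takacs_cond p m n \<le> 3 * S / (1 - f0) * b_fun n" .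
qed

end
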